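(* Let $q_0$ be a probability distribution on $\mathcal X_1$ and, for each $h<H$ and $(x_h,a_h)\in\mathcal A(\mathcal X_h)$, let $q_h(\cdot|x_h,a_h)$ be a probability distribution on $\mathcal X_{h+1}(x_h,a_h)$; set $q_{1:h}(x_h)=q_0(x_1)\prod_{h'=1}^{h-1}q_{h'}(x_{h'+1}|x_{h'},a_{h'})$ along the history of $x_h$. Then $$\sum_{h=1}^H\sum_{x_h\in\mathcal X_h}A(x_h)\frac{q_{1:h}(x_h)}{p^\star_{1:h}(x_h)}=A_{\mathcal X}.$$ Moreover, if $A(x)=A$ for all $x\in\mathcal X$, then for every $h\in[H]$, $$\sum_{x_h\in\mathcal X_h}A(x_h)\frac{q_{1:h}(x_h)}{p^\star_{1:h}(x_h)}\le A^{h-H}A_{\mathcal X}.$$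
   Context: The max-player's information sets form a finite set $\mathcal X=\bigsqcup_{h=1}^H\mathcal X_h$ with perfect recall: each $x_h\in\mathcal X_h$ has a unique history $(x_1,a_1,\dots,x_{h-1},a_{h-1},x_h)$ with $x_i\in\mathcal X_i$, $a_i\in\mathcal A(x_i)$, where $\mathcal A(x)$ is a finite nonempty action set of size $A(x)$. For $h<H$, $\mathcal X_{h+1}(x_h,a_h)$ is the set of $x_{h+1}\in\mathcal X_{h+1}$ whose history contains $(x_h,a_h)$, assumed nonempty. $\mathcal A(\mathcal X_h)=\{(x_h,a_h):x_h\in\mathcal X_h,a_h\in\mathcal A(x_h)\}$, $A_{\mathcal X}=\sum_{x\in\mathcal X}A(x)$. Write $x'\ge x$ if $x'=x$ or $x$ appears in the history of $x'$. Balanced transitions: $A^\tau(x)=\sum_{x'\ge x}A(x')$; $p^\star_0(x_1)=A^\tau(x_1)/A_{\mathcal X}$ for $x_1\in\mathcal X_1$; $p^\star_h(x_{h+1}|x_h,a_h)=A^\tau(x_{h+1})/\sum_{x'\in\mathcal X_{h+1}(x_h,a_h)}A^\tau(x')$; $p^\star_{1:h}(x_h)=p^\star_0(x_1)\prod_{h'=1}^{h-1}p^\star_{h'}(x_{h'+1}|x_{h'},a_{h'})$ along the history of $x_h$. *)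

theory Defs
  imports Main "HOL-Library.FuncSet" Complex_Main
begin

text \<open>Information sets of the max-player are elements of a finite set X of some type 'x.
  layer x in {1..H} is the step h with x in X_h; Act x is the finite nonempty action set A(x);
  par y = (x, a) gives the immediate predecessor pair (x_{h-1}, a_{h-1}) in the (unique, by
  perfect recall) history of y, for y in a layer h > 1.\<close>

definition layer_set :: "'x set \<Rightarrow> ('x \<Rightarrow> nat) \<Rightarrow> nat \<Rightarrow> 'x set" where
  "layer_set X layer h = {x \<in> X. layer x = h}"

definition children :: "'x set \<Rightarrow> ('x \<Rightarrow> nat) \<Rightarrow> ('x \<Rightarrow> 'x \<times> 'a) \<Rightarrow> 'x \<Rightarrow> 'a \<Rightarrow> 'x set" where
  "children X layer par x a = {y \<in> X. 1 < layer y \<and> par y = (x, a)}"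

definition infoset_tree ::
  "'x set \<Rightarrow> nat \<Rightarrow> ('x \<Rightarrow> nat) \<Rightarrow> ('x \<Rightarrow> 'a set) \<Rightarrow> ('x \<Rightarrow> 'x \<times> 'a) \<Rightarrow> bool" where
  "infoset_tree X H layer Act par \<longleftrightarrow>
     finite X \<and>
     (\<forall>x\<in>X. 1 \<le> layer x \<and> layer x \<le> H) \<and>
     (\<forall>x\<in>X. finite (Act x) \<and> Act x \<noteq> {}) \<and>
     (\<forall>y\<in>X. 1 < layer y \<longrightarrow>
        fst (par y) \<in> X \<and> layer (fst (par y)) = layer y - 1 \<and> snd (par y) \<in> Act (fst (par y))) \<and>
     (\<forall>x\<in>X. layer x < H \<longrightarrow> (\<forall>a\<in>Act x. children X layer par x a \<noteq> {}))"

primrec anc :: "('x \<Rightarrow> 'x \<times> 'a) \<Rightarrow> nat \<Rightarrow> 'x \<Rightarrow> 'x" where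
  "anc par 0 y = y"
| "anc par (Suc n) y = fst (par (anc par n y))"

definition desc :: "('x \<Rightarrow> nat) \<Rightarrow> ('x \<Rightarrow> 'x \<times> 'a) \<Rightarrow> 'x \<Rightarrow> 'x \<Rightarrow> bool" where
  "desc layer par x' x \<longleftrightarrow> (\<exists>n < layer x'. anc par n x' = x)"

definition A_X :: "'x set \<Rightarrow> ('x \<Rightarrow> 'a set) \<Rightarrow> nat" where
  "A_X X Act = (\<Sum>x\<in>X. card (Act x))"

definition A_tau :: "'x set \<Rightarrow> ('x \<Rightarrow> nat) \<Rightarrow> ('x \<Rightarrow> 'a set) \<Rightarrow> ('x \<Rightarrow> 'x \<times> 'a) \<Rightarrow> 'x \<Rightarrow> nat" where
  "A_tau X layer Act par x = (\<Sum>x'\<in>{x' \<in> X. desc layer par x' x}. card (Act x'))"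

definition pstar0 :: "'x set \<Rightarrow> ('x \<Rightarrow> nat) \<Rightarrow> ('x \<Rightarrow> 'a set) \<Rightarrow> ('x \<Rightarrow> 'x \<times> 'a) \<Rightarrow> 'x \<Rightarrow> real" where
  "pstar0 X layer Act par x = real (A_tau X layer Act par x) / real (A_X X Act)"

definition pstar_trans :: "'x set \<Rightarrow> ('x \<Rightarrow> nat) \<Rightarrow> ('x \<Rightarrow> 'a set) \<Rightarrow> ('x \<Rightarrow> 'x \<times> 'a)
    \<Rightarrow> 'x \<Rightarrow> 'a \<Rightarrow> 'x \<Rightarrow> real" where
  "pstar_trans X layer Act par x a y =
     real (A_tau X layer Act par y) / real (\<Sum>y'\<in>children X layer par x a. A_tau X layer Act par y')"

primrec path_prob :: "('x \<Rightarrow> 'x \<times> 'a) \<Rightarrow> ('x \<Rightarrow> real) \<Rightarrow> ('x \<Rightarrow> 'a \<Rightarrow> 'x \<Rightarrow> real)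
    \<Rightarrow> nat \<Rightarrow> 'x \<Rightarrow> real" where
  "path_prob par q0 q 0 y = q0 y"
| "path_prob par q0 q (Suc n) y = path_prob par q0 q n (fst (par y)) * q (fst (par y)) (snd (par y)) y"

definition q_path :: "('x \<Rightarrow> nat) \<Rightarrow> ('x \<Rightarrow> 'x \<times> 'a) \<Rightarrow> ('x \<Rightarrow> real) \<Rightarrow> ('x \<Rightarrow> 'a \<Rightarrow> 'x \<Rightarrow> real)
    \<Rightarrow> 'x \<Rightarrow> real" where
  "q_path layer par q0 q y = path_prob par q0 q (layer y - 1) y"

definition pstar_path :: "'x set \<Rightarrow> ('x \<Rightarrow> nat) \<Rightarrow> ('x \<Rightarrow> 'a set) \<Rightarrow> ('x \<Rightarrow> 'x \<times> 'a) \<Rightarrow> 'x \<Rightarrow> real" where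
  "pstar_path X layer Act par y =
     q_path layer par (pstar0 X layer Act par) (pstar_trans X layer Act par) y"

end

theory Submission
  imports Defs
begin

text \<open>Write R(x) = q_{1:h}(x) / p*_{1:h}(x), L(h) for the h-th inner sum of the theorem and
  T(h) for the sum of R(x) A^tau(x) over X_h. For a child y of (x, a) the balanced transition
  gives R(y) A^tau(y) = R(x) S(x, a) q(y|x, a), where S(x, a) is the total A^tau-weight of the
  children of (x, a); summing over the children and using A^tau(x) = A(x) + sum_a S(x, a)
  yields T(h) = L(h) + T(h + 1). At the roots R(x) A^tau(x) = q_0(x) A_X, so T(1) = A_X, and
  T(H + 1) = 0: the L(h) telescope to A_X. If A(x) = A throughout then A^tau(x) >= A^(H-h+1)
  on X_h, whence L(h) <= A^(h-H) T(h) <= A^(h-H) T(1).\<close>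

lemma power_int_diff_nat:
  assumes "h \<le> H"
  shows "(r::real) powi (int h - int H) = 1 / r ^ (H - h)"
proof -
  have "int h - int H = - int (H - h)" using assms by simp
  then show ?thesis by (simp only: power_int_minus_divide power_int_of_nat)
qed

locale infoset_forest =
  fixes X :: "'x set" and H :: nat and layer :: "'x \<Rightarrow> nat" and Act :: "'x \<Rightarrow> 'a set"
    and par :: "'x \<Rightarrow> 'x \<times> 'a"
  assumes tree: "infoset_tree X H layer Act par"
begin

abbreviation Atau :: "'x \<Rightarrow> nat" where
  "Atau x \<equiv> A_tau X layer Act par x"

abbreviation pstar :: "'x \<Rightarrow> real" where
  "pstar x \<equiv> pstar_path X layer Act par x"

definition subtree :: "'x \<Rightarrow> 'x set" where
  "subtree x = {x' \<in> X. desc layer par x' x}"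

definition successors :: "'x \<Rightarrow> 'x set" where
  "successors x = {y \<in> X. 1 < layer y \<and> fst (par y) = x}"

definition Atau_action :: "'x \<Rightarrow> 'a \<Rightarrow> nat" where
  "Atau_action x a = (\<Sum>y\<in>children X layer par x a. Atau y)"

lemma finite_X: "finite X"
  using tree by (simp add: infoset_tree_def)

lemma layer_range: "x \<in> X \<Longrightarrow> 1 \<le> layer x \<and> layer x \<le> H"
  using tree by (simp add: infoset_tree_def)

lemma finite_Act: "x \<in> X \<Longrightarrow> finite (Act x)"
  using tree by (simp add: infoset_tree_def)

lemma card_Act_pos: "x \<in> X \<Longrightarrow> 0 < card (Act x)"
  using tree by (simp add: infoset_tree_def card_gt_0_iff)

lemma parent_in_tree:
  "y \<in> X \<Longrightarrow> 1 < layer y \<Longrightarrow>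
     fst (par y) \<in> X \<and> layer (fst (par y)) = layer y - 1 \<and> snd (par y) \<in> Act (fst (par y))"
  using tree by (simp add: infoset_tree_def)

lemma children_nonempty: "x \<in> X \<Longrightarrow> layer x < H \<Longrightarrow> a \<in> Act x \<Longrightarrow> children X layer par x a \<noteq> {}"
  using tree by (simp add: infoset_tree_def)

lemma finite_children: "finite (children X layer par x a)"
  using finite_X by (simp add: children_def)

lemma mem_children_parent: "y \<in> X \<Longrightarrow> 1 < layer y \<Longrightarrow> y \<in> children X layer par (fst (par y)) (snd (par y))"
  by (simp add: children_def)

lemma children_in_tree:
  assumes "y \<in> children X layer par x a"
  shows "y \<in> X" "1 < layer y" "par y = (x, a)" "x \<in> X" "a \<in> Act x" "layer y = Suc (layer x)"
  using assms parent_in_tree[of y] by (auto simp: children_def)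

lemma successors_in_tree: "y \<in> successors x \<Longrightarrow> y \<in> X \<and> x \<in> X \<and> layer y = Suc (layer x)"
  using parent_in_tree by (fastforce simp: successors_def)

lemma finite_subtree: "finite (subtree x)"
  using finite_X by (simp add: subtree_def)

lemma finite_successors: "finite (successors x)"
  using finite_X by (simp add: successors_def)

lemma ancestor_in_tree: "x \<in> X \<Longrightarrow> n < layer x \<Longrightarrow> anc par n x \<in> X \<and> layer (anc par n x) = layer x - n"
proof (induction n)
  case (Suc n)
  then have "anc par n x \<in> X" "layer (anc par n x) = layer x - n" by auto
  with Suc.prems show ?case using parent_in_tree[of "anc par n x"] by auto
qed simp

lemma desc_iff_anc:
  assumes "x' \<in> X" "x \<in> X"
  shows "desc layer par x' x \<longleftrightarrow> layer x \<le> layer x' \<and> anc par (layer x' - layer x) x' = x"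
proof
  assume "desc layer par x' x"
  then obtain n where n: "n < layer x'" "anc par n x' = x" by (auto simp: desc_def)
  then have "layer x = layer x' - n" using ancestor_in_tree[OF assms(1)] by blast
  with n show "layer x \<le> layer x' \<and> anc par (layer x' - layer x) x' = x"
    by (simp add: diff_diff_cancel)
next
  assume "layer x \<le> layer x' \<and> anc par (layer x' - layer x) x' = x"
  then show "desc layer par x' x"
    using layer_range[OF assms(2)] unfolding desc_def by (intro exI[of _ "layer x' - layer x"]) auto
qed

lemma mem_subtree_iff:
  "x \<in> X \<Longrightarrow> x' \<in> subtree x \<longleftrightarrow> x' \<in> X \<and> layer x \<le> layer x' \<and> anc par (layer x' - layer x) x' = x"
  using desc_iff_anc by (auto simp: subtree_def)

lemma self_mem_subtree: "x \<in> X \<Longrightarrow> x \<in> subtree x"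
  using mem_subtree_iff by simp

lemma successor_subtree_subset:
  assumes y: "y \<in> successors x"
  shows "subtree y \<subseteq> subtree x"
proof
  fix x' assume "x' \<in> subtree y"
  have y': "y \<in> X" "x \<in> X" "layer y = Suc (layer x)" "fst (par y) = x"
    using successors_in_tree[OF y] y by (simp_all add: successors_def)
  have x': "x' \<in> X" "layer y \<le> layer x'" "anc par (layer x' - layer y) x' = y"
    using \<open>x' \<in> subtree y\<close> unfolding mem_subtree_iff[OF y'(1)] by auto
  have "layer x' - layer x = Suc (layer x' - layer y)"
    using x'(2) y'(3) by simp
  then show "x' \<in> subtree x"
    unfolding mem_subtree_iff[OF y'(2)] using x' y' by simp
qed

text \<open>The witness is the ancestor of x' one layer below x.\<close>
lemma subtree_mem_successor_subtree:
  assumes x: "x \<in> X" and x': "x' \<in> subtree x" "x' \<noteq> x"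
  shows "\<exists>y\<in>successors x. x' \<in> subtree y"
proof -
  have x'_tree: "x' \<in> X" "layer x \<le> layer x'" "anc par (layer x' - layer x) x' = x"
    using x' mem_subtree_iff[OF x] by auto
  then have "layer x' \<noteq> layer x"
    using x'(2) by auto
  define m where "m = layer x' - Suc (layer x)"
  have m: "Suc m = layer x' - layer x" "m < layer x'"
    using \<open>layer x' \<noteq> layer x\<close> x'_tree(2) unfolding m_def by arith+
  define y where "y = anc par m x'"
  have y: "y \<in> X" "layer y = layer x' - m"
    using ancestor_in_tree[OF x'_tree(1) m(2)] by (auto simp: y_def)
  have "fst (par y) = x"
    using x'_tree(3) unfolding m(1)[symmetric] y_def by simp
  moreover have "1 < layer y"
    using y(2) m(1) layer_range[OF x] by arith
  ultimately have "y \<in> successors x"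
    using y(1) by (simp add: successors_def)
  moreover have "layer x' - layer y = m" "layer y \<le> layer x'"
    using y(2) m by arith+
  then have "x' \<in> subtree y"
    unfolding mem_subtree_iff[OF y(1)] using x'_tree(1) by (simp add: y_def[symmetric])
  ultimately show ?thesis by blast
qed

lemma subtree_unfold:
  assumes x: "x \<in> X"
  shows "subtree x = insert x (\<Union>y\<in>successors x. subtree y)"
  using self_mem_subtree[OF x] successor_subtree_subset subtree_mem_successor_subtree[OF x] by blast

lemma subtrees_disjoint:
  assumes "y \<in> successors x" "y' \<in> successors x" "y \<noteq> y'"
  shows "subtree y \<inter> subtree y' = {}"
proof -
  have "y \<in> X" "y' \<in> X" "layer y = layer y'"
    using assms(1,2) successors_in_tree by auto
  then show ?thesis
    using assms(3) mem_subtree_iff by auto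
qed

lemma notin_successor_subtree: "y \<in> successors x \<Longrightarrow> x \<notin> subtree y"
  using successors_in_tree mem_subtree_iff by fastforce

lemma Atau_unfold:
  assumes x: "x \<in> X"
  shows "Atau x = card (Act x) + (\<Sum>y\<in>successors x. Atau y)"
proof -
  have Atau_subtree: "\<And>z. Atau z = (\<Sum>x'\<in>subtree z. card (Act x'))"
    by (simp add: A_tau_def subtree_def)
  have "Atau x = card (Act x) + (\<Sum>x'\<in>(\<Union>y\<in>successors x. subtree y). card (Act x'))"
    unfolding Atau_subtree subtree_unfold[OF x]
    using notin_successor_subtree finite_successors finite_subtree by (subst sum.insert) auto
  also have "(\<Sum>x'\<in>(\<Union>y\<in>successors x. subtree y). card (Act x')) = (\<Sum>y\<in>successors x. Atau y)"
    unfolding Atau_subtree using finite_successors finite_subtree subtrees_disjoint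
    by (intro sum.UNION_disjoint) auto
  finally show ?thesis .
qed

lemma sum_successors_by_action:
  assumes x: "x \<in> X"
  shows "sum g (successors x) = (\<Sum>a\<in>Act x. sum g (children X layer par x a))"
proof -
  have "(\<lambda>y. snd (par y)) ` successors x \<subseteq> Act x"
    using parent_in_tree by (auto simp: successors_def)
  then have "sum g (successors x) = (\<Sum>a\<in>Act x. sum g {y \<in> successors x. snd (par y) = a})"
    by (rule sum.group[symmetric, OF finite_successors finite_Act[OF x]])
  also have "\<dots> = (\<Sum>a\<in>Act x. sum g (children X layer par x a))"
    by (auto simp: successors_def children_def prod_eq_iff intro!: sum.cong arg_cong[where f = "sum g"])
  finally show ?thesis .
qed

lemma sum_next_layer:
  assumes h: "1 \<le> h"
  shows "sum g (layer_set X layer (Suc h)) = (\<Sum>x\<in>layer_set X layer h. sum g (successors x))"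
proof -
  have "(\<lambda>y. fst (par y)) ` layer_set X layer (Suc h) \<subseteq> layer_set X layer h"
    using h parent_in_tree by (auto simp: layer_set_def)
  moreover have "finite (layer_set X layer h)" for h
    using finite_X by (simp add: layer_set_def)
  ultimately have "sum g (layer_set X layer (Suc h))
      = (\<Sum>x\<in>layer_set X layer h. sum g {y \<in> layer_set X layer (Suc h). fst (par y) = x})"
    by (intro sum.group[symmetric])
  also have "\<dots> = (\<Sum>x\<in>layer_set X layer h. sum g (successors x))"
    using h successors_in_tree
    by (intro sum.cong refl arg_cong[where f = "sum g"])
       (fastforce simp: successors_def layer_set_def)
  finally show ?thesis .
qed

lemma Atau_eq_card_plus_actions:
  "x \<in> X \<Longrightarrow> Atau x = card (Act x) + (\<Sum>a\<in>Act x. Atau_action x a)"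
  using Atau_unfold sum_successors_by_action by (simp add: Atau_action_def)

lemma Atau_pos: "x \<in> X \<Longrightarrow> 0 < Atau x"
  using Atau_eq_card_plus_actions card_Act_pos by fastforce

lemma Atau_action_le_Atau: "x \<in> X \<Longrightarrow> a \<in> Act x \<Longrightarrow> Atau_action x a \<le> Atau x"
  using Atau_eq_card_plus_actions[of x] finite_Act[of x]
  by (simp add: member_le_sum trans_le_add2)

lemma Atau_le_Atau_action: "y \<in> children X layer par x a \<Longrightarrow> Atau y \<le> Atau_action x a"
  unfolding Atau_action_def using finite_children by (intro member_le_sum) auto

lemma Atau_le_A_X: "Atau x \<le> A_X X Act"
  unfolding A_tau_def A_X_def using finite_X by (intro sum_mono2) auto

lemma Atau_uniform_lower_bound:
  assumes uniform: "\<forall>x\<in>X. card (Act x) = A" and "x \<in> X"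
  shows "A ^ Suc (H - layer x) \<le> Atau x"
  using \<open>x \<in> X\<close>
proof (induction "H - layer x" arbitrary: x)
  case 0
  have "card (Act x) \<le> Atau x"
    using Atau_eq_card_plus_actions[OF 0(2)] by linarith
  then show ?case
    using uniform 0(2) by (simp flip: 0(1))
next
  case (Suc k)
  have "A ^ Suc k \<le> Atau_action x a" if a: "a \<in> Act x" for a
  proof -
    have "layer x < H" using Suc.hyps(2) by simp
    then obtain y where y: "y \<in> children X layer par x a"
      using children_nonempty[OF Suc.prems _ a] by blast
    have "k = H - layer y" "y \<in> X"
      using Suc.hyps(2) children_in_tree[OF y] by simp_all
    then have "A ^ Suc k \<le> Atau y"
      using Suc.hyps(1) by simp
    then show ?thesis
      using Atau_le_Atau_action[OF y] by simp
  qed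
  then have "A * A ^ Suc k \<le> (\<Sum>a\<in>Act x. Atau_action x a)"
    using sum_mono[of "Act x" "\<lambda>_. A ^ Suc k"] uniform Suc.prems by simp
  then show ?case
    using Atau_eq_card_plus_actions[OF Suc.prems] by (simp flip: Suc.hyps(2))
qed

lemma q_path_root: "layer y = 1 \<Longrightarrow> q_path layer par q0 q y = q0 y"
  by (simp add: q_path_def)

lemma q_path_step:
  assumes "y \<in> X" "1 < layer y"
  shows "q_path layer par q0 q y = q_path layer par q0 q (fst (par y)) * q (fst (par y)) (snd (par y)) y"
proof -
  have "layer y - 1 = Suc (layer (fst (par y)) - 1)"
    using parent_in_tree[OF assms] layer_range[of "fst (par y)"] assms(2) by auto
  then show ?thesis unfolding q_path_def by simp
qed

lemma pstar_root: "layer y = 1 \<Longrightarrow> pstar y = real (Atau y) / real (A_X X Act)"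
  by (simp add: pstar_path_def q_path_root pstar0_def)

lemma pstar_step:
  "y \<in> X \<Longrightarrow> 1 < layer y \<Longrightarrow>
     pstar y = pstar (fst (par y)) * (real (Atau y) / real (Atau_action (fst (par y)) (snd (par y))))"
  unfolding pstar_path_def by (subst q_path_step) (auto simp: pstar_trans_def Atau_action_def)

text \<open>The denominator Atau_action x a of each balanced transition is at most Atau x, so
  pstar y \<ge> pstar x * Atau y / Atau x along the history.\<close>
lemma pstar_lower_bound:
  assumes "x \<in> X"
  shows "real (Atau x) / real (A_X X Act) \<le> pstar x"
proof -
  obtain n where "layer x = Suc n" using layer_range[OF assms] by (cases "layer x") auto
  then show ?thesis using assms
  proof (induction n arbitrary: x)
    case 0
    then show ?case by (simp add: pstar_root)
  next
    case (Suc n y)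
    define x a where "x = fst (par y)" and "a = snd (par y)"
    have y: "y \<in> children X layer par x a"
      using mem_children_parent Suc.prems unfolding x_def a_def by simp
    have pos: "0 < Atau y" "Atau y \<le> Atau_action x a"
      using Atau_pos children_in_tree[OF y] Atau_le_Atau_action[OF y] by auto
    have "real (Atau y) / real (A_X X Act)
        = real (Atau_action x a) / real (A_X X Act) * (real (Atau y) / real (Atau_action x a))"
      using pos by simp
    also have "\<dots> \<le> real (Atau x) / real (A_X X Act) * (real (Atau y) / real (Atau_action x a))"
      using Atau_action_le_Atau children_in_tree[OF y]
      by (intro mult_right_mono divide_right_mono) auto
    also have "\<dots> \<le> pstar x * (real (Atau y) / real (Atau_action x a))"
      using Suc.IH children_in_tree[OF y] Suc.prems(1) by (intro mult_right_mono) auto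
    also have "\<dots> = pstar y"
      using pstar_step[of y] Suc.prems by (simp add: x_def a_def)
    finally show ?case .
  qed
qed

lemma pstar_pos:
  assumes "x \<in> X"
  shows "0 < pstar x"
proof -
  have "0 < real (Atau x) / real (A_X X Act)"
    using Atau_pos[OF assms] Atau_le_A_X[of x] by (intro divide_pos_pos) auto
  then show ?thesis
    using pstar_lower_bound[OF assms] by linarith
qed

end

locale infoset_kernel = infoset_forest X H layer Act par
  for X :: "'x set" and H :: nat and layer :: "'x \<Rightarrow> nat" and Act :: "'x \<Rightarrow> 'a set"
    and par :: "'x \<Rightarrow> 'x \<times> 'a" +
  fixes q0 :: "'x \<Rightarrow> real" and q :: "'x \<Rightarrow> 'a \<Rightarrow> 'x \<Rightarrow> real"
  assumes q0_nonneg: "\<forall>x\<in>layer_set X layer 1. 0 \<le> q0 x"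
    and q0_sum: "(\<Sum>x\<in>layer_set X layer 1. q0 x) = 1"
    and q_nonneg: "\<forall>x\<in>X. layer x < H \<longrightarrow> (\<forall>a\<in>Act x. \<forall>y\<in>children X layer par x a. 0 \<le> q x a y)"
    and q_sum: "\<forall>x\<in>X. layer x < H \<longrightarrow> (\<forall>a\<in>Act x. (\<Sum>y\<in>children X layer par x a. q x a y) = 1)"
begin

abbreviation qpath :: "'x \<Rightarrow> real" where
  "qpath x \<equiv> q_path layer par q0 q x"

definition layer_sum :: "nat \<Rightarrow> real" where
  "layer_sum h = (\<Sum>x\<in>layer_set X layer h. real (card (Act x)) * qpath x / pstar x)"

definition Atau_layer_sum :: "nat \<Rightarrow> real" where
  "Atau_layer_sum h = (\<Sum>x\<in>layer_set X layer h. qpath x / pstar x * real (Atau x))"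

lemma qpath_nonneg:
  assumes "x \<in> X"
  shows "0 \<le> qpath x"
proof -
  obtain n where "layer x = Suc n" using layer_range[OF assms] by (cases "layer x") auto
  then show ?thesis using assms
  proof (induction n arbitrary: x)
    case 0
    then show ?case using q0_nonneg by (simp add: q_path_root layer_set_def)
  next
    case (Suc n y)
    define x a where "x = fst (par y)" and "a = snd (par y)"
    have y: "y \<in> children X layer par x a"
      using mem_children_parent Suc.prems unfolding x_def a_def by simp
    have "layer x < H"
      using children_in_tree[OF y] layer_range[OF Suc.prems(2)] by simp
    then have "0 \<le> q x a y"
      using q_nonneg children_in_tree[OF y] y by blast
    moreover have "0 \<le> qpath x"
      using Suc.IH children_in_tree[OF y] Suc.prems(1) by simp
    ultimately show ?case
      using q_path_step[of y] Suc.prems by (simp add: x_def a_def)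
  qed
qed

lemma sum_children_ratio_Atau:
  assumes x: "x \<in> X" and a: "a \<in> Act x"
  shows "(\<Sum>y\<in>children X layer par x a. qpath y / pstar y * real (Atau y))
       = qpath x / pstar x * real (Atau_action x a)"
proof (cases "children X layer par x a = {}")
  case True
  then show ?thesis by (simp add: Atau_action_def)
next
  case False
  then obtain y where "y \<in> children X layer par x a" by blast
  then have "layer x < H"
    using children_in_tree layer_range by fastforce
  have "qpath y / pstar y * real (Atau y) = qpath x / pstar x * real (Atau_action x a) * q x a y"
    if y: "y \<in> children X layer par x a" for y
  proof -
    have qpath_y: "qpath y = qpath x * q x a y"
      and pstar_y: "pstar y = pstar x * (real (Atau y) / real (Atau_action x a))"
      using q_path_step[of y] pstar_step[of y] children_in_tree[OF y] by simp_all
    have "0 < Atau y" "Atau y \<le> Atau_action x a" "0 < pstar x"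
      using Atau_pos pstar_pos Atau_le_Atau_action[OF y] children_in_tree[OF y] by auto
    then show ?thesis
      unfolding qpath_y pstar_y by (simp add: field_simps)
  qed
  then have "(\<Sum>y\<in>children X layer par x a. qpath y / pstar y * real (Atau y))
      = qpath x / pstar x * real (Atau_action x a) * (\<Sum>y\<in>children X layer par x a. q x a y)"
    by (simp add: sum_distrib_left)
  then show ?thesis using q_sum x a \<open>layer x < H\<close> by simp
qed

lemma Atau_layer_sum_step:
  assumes "1 \<le> h"
  shows "Atau_layer_sum h = layer_sum h + Atau_layer_sum (Suc h)"
proof -
  have "Atau_layer_sum (Suc h) = (\<Sum>x\<in>layer_set X layer h. \<Sum>a\<in>Act x. qpath x / pstar x * real (Atau_action x a))"
    unfolding Atau_layer_sum_def sum_next_layer[OF assms]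
  proof (rule sum.cong[OF refl])
    fix x assume "x \<in> layer_set X layer h"
    then have x: "x \<in> X" by (simp add: layer_set_def)
    show "(\<Sum>y\<in>successors x. qpath y / pstar y * real (Atau y))
        = (\<Sum>a\<in>Act x. qpath x / pstar x * real (Atau_action x a))"
      unfolding sum_successors_by_action[OF x] by (rule sum.cong[OF refl], rule sum_children_ratio_Atau[OF x])
  qed
  moreover have "qpath x / pstar x * real (Atau x)
      = real (card (Act x)) * qpath x / pstar x + (\<Sum>a\<in>Act x. qpath x / pstar x * real (Atau_action x a))"
    if "x \<in> X" for x
    using Atau_eq_card_plus_actions[OF that] by (simp add: sum_distrib_left sum_divide_distrib algebra_simps)
  ultimately show ?thesis
    unfolding Atau_layer_sum_def layer_sum_def by (simp add: layer_set_def sum.distrib)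
qed

lemma Atau_layer_sum_root: "Atau_layer_sum 1 = real (A_X X Act)"
proof -
  have "qpath x / pstar x * real (Atau x) = real (A_X X Act) * q0 x" if "x \<in> layer_set X layer 1" for x
    using that Atau_pos[of x] Atau_le_A_X[of x]
    by (simp add: layer_set_def pstar_root q_path_root field_simps)
  then have "Atau_layer_sum 1 = real (A_X X Act) * (\<Sum>x\<in>layer_set X layer 1. q0 x)"
    unfolding Atau_layer_sum_def by (simp add: sum_distrib_left)
  then show ?thesis using q0_sum by simp
qed

lemma Atau_layer_sum_beyond: "Atau_layer_sum (Suc H) = 0"
proof -
  have "layer_set X layer (Suc H) = {}"
    using layer_range by (force simp: layer_set_def)
  then show ?thesis by (simp add: Atau_layer_sum_def)
qed

lemma sum_layer_sum_telescope: "(\<Sum>h=1..n. layer_sum h) = Atau_layer_sum 1 - Atau_layer_sum (Suc n)"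
proof (induction n)
  case (Suc n)
  then show ?case using Atau_layer_sum_step[of "Suc n"] by simp
qed simp

lemma layer_sum_nonneg: "0 \<le> layer_sum h"
  unfolding layer_sum_def
  by (intro sum_nonneg divide_nonneg_pos mult_nonneg_nonneg)
     (auto simp: layer_set_def qpath_nonneg pstar_pos)

lemma Atau_layer_sum_le_root: "1 \<le> h \<Longrightarrow> Atau_layer_sum h \<le> Atau_layer_sum 1"
proof (induction h rule: dec_induct)
  case (step h)
  then show ?case using Atau_layer_sum_step[of h] layer_sum_nonneg[of h] by simp
qed simp

lemma sum_layer_sum: "(\<Sum>h=1..H. layer_sum h) = real (A_X X Act)"
  using sum_layer_sum_telescope Atau_layer_sum_beyond Atau_layer_sum_root by simp

lemma layer_sum_uniform_bound:
  assumes uniform: "\<forall>x\<in>X. card (Act x) = A" and h: "h \<in> {1..H}"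
  shows "layer_sum h \<le> real A powi (int h - int H) * real (A_X X Act)"
proof -
  have powi: "real A powi (int h - int H) = 1 / real A ^ (H - h)"
    using h by (simp add: power_int_diff_nat)
  have "real (card (Act x)) * qpath x / pstar x \<le> real A powi (int h - int H) * (qpath x / pstar x * real (Atau x))"
    if x: "x \<in> layer_set X layer h" for x
  proof -
    have "x \<in> X" "layer x = h" using x by (auto simp: layer_set_def)
    then have "A ^ Suc (H - h) \<le> Atau x" "card (Act x) = A" "0 < A"
      using Atau_uniform_lower_bound uniform card_Act_pos by fastforce+
    then have "real A * real A ^ (H - h) \<le> real (Atau x)" "0 < real A"
      by (simp_all flip: of_nat_power of_nat_mult)
    then have A_le: "real A \<le> real (Atau x) / real A ^ (H - h)"
      by (simp add: pos_le_divide_eq)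
    have "0 \<le> qpath x / pstar x"
      using qpath_nonneg pstar_pos \<open>x \<in> X\<close> by (simp add: less_imp_le)
    then have "real A * (qpath x / pstar x) \<le> real (Atau x) / real A ^ (H - h) * (qpath x / pstar x)"
      by (rule mult_right_mono[OF A_le])
    then show ?thesis
      using \<open>card (Act x) = A\<close> unfolding powi by (simp add: mult.commute)
  qed
  then have "layer_sum h \<le> real A powi (int h - int H) * Atau_layer_sum h"
    unfolding layer_sum_def Atau_layer_sum_def by (simp add: sum_distrib_left sum_mono)
  also have "\<dots> \<le> real A powi (int h - int H) * Atau_layer_sum 1"
    using Atau_layer_sum_le_root h powi by (intro mult_left_mono) auto
  finally show ?thesis using Atau_layer_sum_root by simp
qed

end

theorem mainTheorem7:
  fixes X :: "'x set" and H :: nat and layer :: "'x \<Rightarrow> nat" and Act :: "'x \<Rightarrow> 'a set"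
    and par :: "'x \<Rightarrow> 'x \<times> 'a"
    and q0 :: "'x \<Rightarrow> real" and q :: "'x \<Rightarrow> 'a \<Rightarrow> 'x \<Rightarrow> real"
  assumes tree: "infoset_tree X H layer Act par"
    and q0_nonneg: "\<forall>x\<in>layer_set X layer 1. 0 \<le> q0 x"
    and q0_sum: "(\<Sum>x\<in>layer_set X layer 1. q0 x) = 1"
    and q_nonneg: "\<forall>x\<in>X. layer x < H \<longrightarrow> (\<forall>a\<in>Act x. \<forall>y\<in>children X layer par x a. 0 \<le> q x a y)"
    and q_sum: "\<forall>x\<in>X. layer x < H \<longrightarrow> (\<forall>a\<in>Act x. (\<Sum>y\<in>children X layer par x a. q x a y) = 1)"
  shows "((\<Sum>h=1..H. \<Sum>x\<in>layer_set X layer h.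
            real (card (Act x)) * q_path layer par q0 q x / pstar_path X layer Act par x)
           = real (A_X X Act)) \<and>
         (\<forall>A :: nat. (\<forall>x\<in>X. card (Act x) = A) \<longrightarrow>
           (\<forall>h\<in>{1..H}. (\<Sum>x\<in>layer_set X layer h.
              real (card (Act x)) * q_path layer par q0 q x / pstar_path X layer Act par x)
            \<le> real A powi (int h - int H) * real (A_X X Act)))"
proof -
  interpret infoset_kernel X H layer Act par q0 q
    using assms by unfold_locales
  show ?thesis
    using sum_layer_sum layer_sum_uniform_bound unfolding layer_sum_def by blast
qed

end
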